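(* Let $\mathcal{B}$ be a prime Banach algebra over $\mathbb{R}$ or $\mathbb{C}$, and let $\mathcal{H}_1,\mathcal{H}_2$ be non-empty open subsets of $\mathcal{B}$. Suppose $\mathcal{B}$ admits a continuous automorphism $f$ such that for every $(x,y)\in\mathcal{H}_1\times\mathcal{H}_2$ there exist positive integers $p=p(x,y)$, $q=q(x,y)$ with $$f(x^{p}\circ y^{q})+[x^{p},y^{q}]\in Z(\mathcal{B}).$$ Then $\mathcal{B}$ is commutative.
   Context: $Z(\mathcal{B})$ denotes the center of $\mathcal{B}$. For $x,y\in\mathcal{B}$, $x\circ y=xy+yx$ and $[x,y]=xy-yx$. $\mathcal{B}$ is prime if $x\mathcal{B}y=\{0\}$ implies $x=0$ or $y=0$. An automorphism of $\mathcal{B}$ is a bijective map $f:\mathcal{B}\to\mathcal{B}$ with $f(x+y)=f(x)+f(y)$ and $f(xy)=f(x)f(y)$ for all $x,y$. *)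

theory Defs
  imports "HOL-Analysis.Analysis"
begin

text \<open>Positive powers in a possibly non-unital algebra: ppow x n = x^n for n \<ge> 1
  (the value at n = 0 is a junk value and is never used).\<close>
fun ppow :: "'a::times \<Rightarrow> nat \<Rightarrow> 'a" where
  "ppow x 0 = x"
| "ppow x (Suc 0) = x"
| "ppow x (Suc (Suc n)) = x * ppow x (Suc n)"

definition center :: "'a::times set" where
  "center = {z. \<forall>x. z * x = x * z}"

definition jordan_prod :: "'a::{times,plus} \<Rightarrow> 'a \<Rightarrow> 'a" where
  "jordan_prod x y = x * y + y * x"

definition commutator :: "'a::{times,minus} \<Rightarrow> 'a \<Rightarrow> 'a" where
  "commutator x y = x * y - y * x"

definition prime_ring :: "'a::{times,zero} itself \<Rightarrow> bool" where
  "prime_ring _ \<longleftrightarrow> (\<forall>x y::'a. (\<forall>b. x * b * y = 0) \<longrightarrow> x = 0 \<or> y = 0)"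

definition is_automorphism :: "('a::{times,plus} \<Rightarrow> 'a) \<Rightarrow> bool" where
  "is_automorphism f \<longleftrightarrow> bij f \<and> (\<forall>x y. f (x + y) = f x + f y) \<and> (\<forall>x y. f (x * y) = f x * f y)"

end

theory Submission
  imports Defs
begin

text \<open>
  A continuous additive map is real-linear, so for fixed \<open>p, q\<close> the map
  \<open>(x, y) \<mapsto> f (x\<^sup>p \<circ> y\<^sup>q) + [x\<^sup>p, y\<^sup>q]\<close> is polynomial along every real line in
  \<open>B \<times> B\<close>. By Baire's theorem a single pair \<open>(p, q)\<close> works on a nonempty open set, and
  since a polynomial vanishing near a point vanishes identically, the identity holds on all
  of \<open>B \<times> B\<close>. On the diagonal it reads \<open>2 f (x\<^sup>n) \<in> Z(B)\<close> with \<open>n = p + q\<close>, so every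
  \<open>n\<close>-th power is central. Differentiating \<open>(x + t x\<^sup>2)\<^sup>n\<close> at \<open>t = 0\<close> shows that
  \<open>x \<cdot> x\<^sup>n\<close> is central as well, which by primeness makes \<open>x\<close> central unless \<open>x\<^sup>n = 0\<close>.
  A non-central element would thus force all \<open>n\<close>-th powers to vanish, and a prime algebra
  of bounded nil index is zero.
\<close>

lemma ppow_Suc: "0 < n \<Longrightarrow> ppow x (Suc n) = x * ppow x n"
  by (cases n) auto

lemma ppow_add: "0 < m \<Longrightarrow> 0 < n \<Longrightarrow> ppow (x::'a::semigroup_mult) m * ppow x n = ppow x (m + n)"
  by (induction x m rule: ppow.induct) (auto simp: ppow_Suc mult.assoc)

lemma continuous_on_ppow [continuous_intros]:
  fixes g :: "'b::topological_space \<Rightarrow> 'a::real_normed_algebra"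
  assumes "continuous_on S g"
  shows "continuous_on S (\<lambda>z. ppow (g z) n)"
proof (induction n)
  case (Suc n)
  then show ?case
    using assms by (cases n) (auto intro!: continuous_intros)
qed (use assms in simp)

lemma linear_if_additive_continuous:
  fixes g :: "'a::real_normed_vector \<Rightarrow> 'b::real_normed_vector"
  assumes add: "\<And>x y. g (x + y) = g x + g y" and cont: "continuous_on UNIV g"
  shows "linear g"
proof (rule linearI[OF add])
  interpret additive g by standard (rule add)
  fix r x
  have g_int: "g (of_int i *\<^sub>R y) = of_int i *\<^sub>R g y" for i y
    by (induction i rule: int_induct[where k=0]) (simp_all add: scaleR_add_left scaleR_diff_left add zero diff)
  have "g (q *\<^sub>R x) = q *\<^sub>R g x" if q: "q \<in> \<rat>" for q
  proof -
    obtain a b where ab: "q = of_int a / of_int b" "b > 0"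
      using q by (auto elim: Rats_cases')
    have "of_int b *\<^sub>R g (q *\<^sub>R x) = of_int b *\<^sub>R (q *\<^sub>R g x)"
      using g_int[of b "q *\<^sub>R x"] g_int[of a x] ab by simp
    then show ?thesis using ab(2) by (simp only: scaleR_cancel_left) simp
  qed
  then have "\<rat> \<subseteq> {r. g (r *\<^sub>R x) = r *\<^sub>R g x}" by blast
  moreover have "closed {r. g (r *\<^sub>R x) = r *\<^sub>R g x}"
    by (intro closed_Collect_eq continuous_intros continuous_on_compose2[OF cont]) auto
  ultimately have "closure \<rat> \<subseteq> {r. g (r *\<^sub>R x) = r *\<^sub>R g x}"
    by (rule closure_minimal)
  then show "g (r *\<^sub>R x) = r *\<^sub>R g x" by (auto simp: Rats_closure_real)
qed

definition poly_curve :: "(real \<Rightarrow> 'a::real_vector) \<Rightarrow> bool" where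
  "poly_curve h \<longleftrightarrow> (\<exists>N c. \<forall>t. h t = (\<Sum>k<N. t ^ k *\<^sub>R c k))"

lemma poly_curve_const: "poly_curve (\<lambda>t. c)"
  unfolding poly_curve_def by (rule exI[of _ 1]) auto

lemma poly_curve_line: "poly_curve (\<lambda>t. a + t *\<^sub>R b)"
  unfolding poly_curve_def
  by (rule exI[of _ 2], rule exI[of _ "\<lambda>k. if k = 0 then a else b"]) (simp add: numeral_2_eq_2)

lemma sum_lessThan_extend:
  fixes g :: "nat \<Rightarrow> 'a::comm_monoid_add"
  assumes "N \<le> M"
  shows "(\<Sum>k<N. g k) = (\<Sum>k<M. if k < N then g k else 0)"
proof -
  have "{..<M} \<inter> {..<N} = {..<N}" using assms by auto
  then show ?thesis using sum.inter_restrict[of "{..<M}" g "{..<N}"] by simp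
qed

lemma poly_curve_add:
  assumes "poly_curve h1" "poly_curve h2"
  shows "poly_curve (\<lambda>t. h1 t + h2 t)"
proof -
  obtain N1 c1 where h1: "\<And>t. h1 t = (\<Sum>k<N1. t ^ k *\<^sub>R c1 k)"
    using assms(1) unfolding poly_curve_def by blast
  obtain N2 c2 where h2: "\<And>t. h2 t = (\<Sum>k<N2. t ^ k *\<^sub>R c2 k)"
    using assms(2) unfolding poly_curve_def by blast
  define c where "c k = (if k < N1 then c1 k else 0) + (if k < N2 then c2 k else 0)" for k
  have "h1 t + h2 t = (\<Sum>k<N1+N2. t ^ k *\<^sub>R c k)" for t
  proof -
    have "h1 t = (\<Sum>k<N1+N2. if k < N1 then t ^ k *\<^sub>R c1 k else 0)"
      unfolding h1 by (rule sum_lessThan_extend) simp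
    moreover have "h2 t = (\<Sum>k<N1+N2. if k < N2 then t ^ k *\<^sub>R c2 k else 0)"
      unfolding h2 by (rule sum_lessThan_extend) simp
    ultimately show ?thesis
      by (simp add: sum.distrib[symmetric], intro sum.cong) (auto simp: c_def scaleR_add_right)
  qed
  then show ?thesis unfolding poly_curve_def by blast
qed

lemma poly_curve_linear:
  assumes "linear g" "poly_curve h"
  shows "poly_curve (\<lambda>t. g (h t))"
proof -
  obtain N c where "\<And>t. h t = (\<Sum>k<N. t ^ k *\<^sub>R c k)"
    using assms(2) unfolding poly_curve_def by blast
  then have "g (h t) = (\<Sum>k<N. t ^ k *\<^sub>R g (c k))" for t
    by (simp add: linear_sum[OF assms(1)] linear_scale[OF assms(1)])
  then show ?thesis unfolding poly_curve_def by (intro exI[of _ N] exI[of _ "\<lambda>k. g (c k)"]) simp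
qed

lemma poly_curve_diff:
  assumes "poly_curve h1" "poly_curve h2"
  shows "poly_curve (\<lambda>t. h1 t - h2 t)"
  using poly_curve_add[OF assms(1) poly_curve_linear[OF linear_uminus assms(2)]] by simp

lemma poly_curve_mult:
  fixes h1 h2 :: "real \<Rightarrow> 'a::real_algebra"
  assumes "poly_curve h1" "poly_curve h2"
  shows "poly_curve (\<lambda>t. h1 t * h2 t)"
proof -
  obtain N c where h1: "\<And>t. h1 t = (\<Sum>i<N. t ^ i *\<^sub>R c i)"
    using assms(1) unfolding poly_curve_def by blast
  obtain M d where h2: "\<And>t. h2 t = (\<Sum>j<M. t ^ j *\<^sub>R d j)"
    using assms(2) unfolding poly_curve_def by blast
  define e where "e k = (\<Sum>i<N. \<Sum>j<M. if i + j = k then c i * d j else 0)" for k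
  have "h1 t * h2 t = (\<Sum>k<N+M. t ^ k *\<^sub>R e k)" for t
  proof -
    have "h1 t * h2 t = (\<Sum>i<N. \<Sum>j<M. t ^ (i + j) *\<^sub>R (c i * d j))"
      unfolding h1 h2 sum_product by (simp add: power_add mult.commute)
    also have "\<dots> = (\<Sum>i<N. \<Sum>j<M. \<Sum>k<N+M. if i + j = k then t ^ k *\<^sub>R (c i * d j) else 0)"
      by (intro sum.cong refl) (simp add: sum.delta)
    also have "\<dots> = (\<Sum>k<N+M. \<Sum>i<N. \<Sum>j<M. if i + j = k then t ^ k *\<^sub>R (c i * d j) else 0)"
      by (simp only: sum.swap[where A = "{..<M}" and B = "{..<N+M}"]
          sum.swap[where A = "{..<N}" and B = "{..<N+M}"])
    also have "\<dots> = (\<Sum>k<N+M. t ^ k *\<^sub>R e k)"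
      unfolding e_def scaleR_sum_right by (intro sum.cong refl) simp
    finally show ?thesis .
  qed
  then show ?thesis unfolding poly_curve_def by blast
qed

lemma poly_curve_ppow:
  fixes h :: "real \<Rightarrow> 'a::real_algebra"
  assumes "poly_curve h"
  shows "poly_curve (\<lambda>t. ppow (h t) n)"
proof (induction n)
  case (Suc n)
  then show ?case
    using assms by (cases n) (auto simp: ppow_Suc intro: poly_curve_mult)
qed (use assms in simp)

lemma poly_coeffs_eq_0:
  fixes c :: "nat \<Rightarrow> 'a::real_normed_vector"
  assumes "eventually (\<lambda>t. (\<Sum>k<N. t ^ k *\<^sub>R c k) = 0) (at 0)"
  shows "k < N \<Longrightarrow> c k = 0"
  using assms
proof (induction N arbitrary: c k)
  case (Suc N)
  define r where "r t = (\<Sum>k<N. t ^ k *\<^sub>R c (Suc k))" for t :: real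
  have split: "(\<Sum>k<Suc N. t ^ k *\<^sub>R c k) = c 0 + t *\<^sub>R r t" for t
    by (simp add: r_def sum.lessThan_Suc_shift scaleR_sum_right del: sum.lessThan_Suc)
  have "((\<lambda>t. c 0 + t *\<^sub>R r t) \<longlongrightarrow> c 0 + 0 *\<^sub>R r 0) (at 0)"
    unfolding r_def by (intro tendsto_intros)
  moreover have "((\<lambda>t. c 0 + t *\<^sub>R r t) \<longlongrightarrow> 0) (at 0)"
    using Suc.prems(2) unfolding split by (rule tendsto_eventually)
  ultimately have c0: "c 0 = 0"
    using tendsto_unique[OF trivial_limit_at] by fastforce
  have "eventually (\<lambda>t. t *\<^sub>R r t = 0) (at 0)"
    using Suc.prems(2) unfolding split c0 by simp
  then have "eventually (\<lambda>t. r t = 0) (at 0)"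
    using eventually_neq_at_within[of 0 0 UNIV] by eventually_elim simp
  then show ?case
    using Suc.IH[of "k - 1" "\<lambda>k. c (Suc k)"] Suc.prems(1) c0 by (cases k) (auto simp: r_def)
qed simp

lemma poly_curve_eq_0:
  fixes h :: "real \<Rightarrow> 'a::real_normed_vector"
  assumes "poly_curve h" "eventually (\<lambda>t. h t = 0) (at 0)"
  shows "h t = 0"
proof -
  obtain N c where h: "\<And>t. h t = (\<Sum>k<N. t ^ k *\<^sub>R c k)"
    using assms(1) unfolding poly_curve_def by blast
  then show ?thesis
    using poly_coeffs_eq_0[where N=N and c=c] assms(2) by simp
qed

lemma poly_on_lines_eq_0:
  fixes \<Phi> :: "'a::real_normed_vector \<Rightarrow> 'b::real_normed_vector"
  assumes poly: "\<And>a b. poly_curve (\<lambda>t. \<Phi> (a + t *\<^sub>R b))"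
    and U: "open U" "a \<in> U" and vanish: "\<And>u. u \<in> U \<Longrightarrow> \<Phi> u = 0"
  shows "\<Phi> x = 0"
proof -
  have "((\<lambda>t. a + t *\<^sub>R (x - a)) \<longlongrightarrow> a) (at (0::real))"
    by (auto intro!: tendsto_eq_intros)
  then have "eventually (\<lambda>t. a + t *\<^sub>R (x - a) \<in> U) (at 0)"
    using U by (rule topological_tendstoD)
  then have "eventually (\<lambda>t. \<Phi> (a + t *\<^sub>R (x - a)) = 0) (at 0)"
    by eventually_elim (rule vanish)
  from poly_curve_eq_0[OF poly this, of 1] show ?thesis by simp
qed

lemma closed_center: "closed (center :: 'a::real_normed_algebra set)"
proof -
  have eq: "center = (\<Inter>w. {z::'a. z * w = w * z})" unfolding center_def by blast
  show ?thesis
    unfolding eq by (intro closed_INT ballI closed_Collect_eq continuous_intros)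
qed

lemma center_scaleR: "z \<in> center \<Longrightarrow> r *\<^sub>R (z::'a::real_algebra) \<in> center"
  by (simp add: center_def)

lemma center_diff: "z \<in> center \<Longrightarrow> w \<in> center \<Longrightarrow> z - (w::'a::ring) \<in> center"
  by (simp add: center_def algebra_simps)

lemma poly_on_lines_central:
  fixes \<Phi> :: "'a::real_normed_vector \<Rightarrow> 'b::real_normed_algebra"
  assumes poly: "\<And>a b. poly_curve (\<lambda>t. \<Phi> (a + t *\<^sub>R b))"
    and U: "open U" "a \<in> U" and central: "\<And>u. u \<in> U \<Longrightarrow> \<Phi> u \<in> center"
  shows "\<Phi> x \<in> center"
proof -
  have "\<Phi> x * w - w * \<Phi> x = 0" for w
  proof (rule poly_on_lines_eq_0[OF _ U])
    show "poly_curve (\<lambda>t. \<Phi> (a + t *\<^sub>R b) * w - w * \<Phi> (a + t *\<^sub>R b))" for a b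
      by (intro poly_curve_diff poly_curve_mult poly poly_curve_const)
    show "\<Phi> u * w - w * \<Phi> u = 0" if "u \<in> U" for u
      using central[OF that] by (simp add: center_def)
  qed
  then show ?thesis by (simp add: center_def)
qed

lemma center_if_image_center:
  assumes "inj f" "\<And>x y. f (x * y) = f x * f y" "f c \<in> center"
  shows "c \<in> center"
proof -
  have "f (c * x) = f (x * c)" for x
    using assms(3) by (simp add: assms(2) center_def)
  then show ?thesis using assms(1) by (simp add: center_def inj_eq)
qed

lemma Baire_countable_closed_cover:
  fixes W :: "'a::complete_space set" and E :: "'i::countable \<Rightarrow> 'a set"
  assumes W: "open W" "W \<noteq> {}" and closed: "\<And>i. closed (E i)" and cover: "W \<subseteq> (\<Union>i. E i)"
  obtains i where "interior (E i) \<noteq> {}"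
proof -
  let ?X = "top_of_set W"
  have complete: "completely_metrizable_space ?X"
    using W(1) by (simp add: completely_metrizable_space_openin completely_metrizable_space_euclidean)
  have closedin: "closedin ?X (W \<inter> E i)" for i
    using closed by (simp add: closedin_closed_Int)
  have "\<exists>i. ?X interior_of (W \<inter> E i) \<noteq> {}"
  proof (rule ccontr)
    assume "\<nexists>i. ?X interior_of (W \<inter> E i) \<noteq> {}"
    then have "?X interior_of (\<Union>i. W \<inter> E i) = {}"
      using complete closedin by (intro Baire_category_alt) auto
    moreover have "(\<Union>i. W \<inter> E i) = topspace ?X"
      using cover by auto
    ultimately show False
      using W(2) by (simp add: interior_of_openin openin_subtopology_refl)
  qed
  then obtain i where "?X interior_of (W \<inter> E i) \<noteq> {}" ..
  moreover have "?X interior_of (W \<inter> E i) \<subseteq> interior (E i)"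
    using W(1) by (auto simp: interior_of_subtopology_open)
  ultimately show thesis using that by blast
qed

fun ppow_deriv :: "'a::{times,plus} \<Rightarrow> 'a \<Rightarrow> nat \<Rightarrow> 'a" where
  "ppow_deriv a b 0 = b"
| "ppow_deriv a b (Suc 0) = b"
| "ppow_deriv a b (Suc (Suc n)) = a * ppow_deriv a b (Suc n) + b * ppow a (Suc n)"

lemma has_vector_derivative_ppow:
  fixes a b :: "'a::real_normed_algebra"
  shows "0 < n \<Longrightarrow>
    ((\<lambda>t. ppow (a + t *\<^sub>R b) n) has_vector_derivative ppow_deriv a b n) (at 0)"
proof (induction a b n rule: ppow_deriv.induct)
  case (2 a b)
  then show ?case by (auto intro!: derivative_eq_intros)
next
  case (3 a b n)
  have "((\<lambda>t. (a + t *\<^sub>R b) * ppow (a + t *\<^sub>R b) (Suc n)) has_vector_derivative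
          (a + 0 *\<^sub>R b) * ppow_deriv a b (Suc n) + b * ppow (a + 0 *\<^sub>R b) (Suc n)) (at 0)"
    using 3 by (intro has_vector_derivative_mult) (auto intro!: derivative_eq_intros)
  then show ?case by simp
qed simp

lemma ppow_deriv_square:
  "0 < n \<Longrightarrow> ppow_deriv x (x * x) n = of_nat n *\<^sub>R ppow (x::'a::real_algebra) (Suc n)"
proof (induction x "x * x" n rule: ppow_deriv.induct)
  case (3 x n)
  then show ?case
    by (simp add: ppow_Suc mult.assoc algebra_simps scaleR_2)
qed simp_all

lemma has_vector_derivative_center:
  fixes \<phi> :: "real \<Rightarrow> 'a::real_normed_algebra"
  assumes "(\<phi> has_vector_derivative d) (at t)" "\<And>t. \<phi> t \<in> center"
  shows "d \<in> center"
proof -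
  have "d * w - w * d = 0" for w
  proof (rule vector_derivative_unique_at)
    show "((\<lambda>t. \<phi> t * w - w * \<phi> t) has_vector_derivative d * w - w * d) (at t)"
      by (intro derivative_intros assms(1))
    show "((\<lambda>t. \<phi> t * w - w * \<phi> t) has_vector_derivative 0) (at t)"
      using assms(2) by (simp add: center_def has_vector_derivative_const)
  qed
  then show ?thesis by (simp add: center_def)
qed

lemma central_or_ppow_eq_0:
  fixes x :: "'a::real_normed_algebra"
  assumes prime: "prime_ring TYPE('a)" and n: "0 < n" and central: "\<And>y::'a. ppow y n \<in> center"
  shows "x \<in> center \<or> ppow x n = 0"
proof -
  define c where "c = ppow x n"
  have "of_nat n *\<^sub>R ppow x (Suc n) \<in> center"
    using has_vector_derivative_center[OF has_vector_derivative_ppow[OF n, where a = x and b = "x * x"] central]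
    by (simp add: ppow_deriv_square[OF n])
  then have "(1 / of_nat n) *\<^sub>R (of_nat n *\<^sub>R ppow x (Suc n)) \<in> center"
    by (rule center_scaleR)
  then have xc: "x * c \<in> center"
    using n by (simp add: c_def ppow_Suc)
  have c: "c \<in> center"
    unfolding c_def by (rule central)
  have "(x * r - r * x) * b * c = 0" for r b
  proof -
    have "(x * r - r * x) * b * c = (x * (r * c) - r * (x * c)) * b"
      using c by (simp add: center_def mult.assoc algebra_simps)
    also have "x * (r * c) = (x * c) * r"
      using c by (simp add: center_def mult.assoc)
    also have "\<dots> = r * (x * c)"
      using xc by (simp add: center_def)
    finally show ?thesis by simp
  qed
  then have "x * r - r * x = 0 \<or> c = 0" for r
    using prime unfolding prime_ring_def by blast
  then show ?thesis
    by (auto simp: center_def c_def)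
qed

lemma ppow_eq_0_descent:
  fixes y :: "'a::real_normed_algebra"
  assumes prime: "prime_ring TYPE('a)" and nil: "\<And>z::'a. ppow z (Suc (Suc m)) = 0"
  shows "ppow y (Suc m) = 0"
proof -
  define c where "c = ppow y (Suc m)"
  have "c * x * c = 0" for x
  proof -
    have "ppow_deriv y x (Suc (Suc m)) = 0"
    proof (rule vector_derivative_unique_at)
      show "((\<lambda>t. ppow (y + t *\<^sub>R x) (Suc (Suc m))) has_vector_derivative ppow_deriv y x (Suc (Suc m))) (at 0)"
        by (rule has_vector_derivative_ppow) simp
      show "((\<lambda>t. ppow (y + t *\<^sub>R x) (Suc (Suc m))) has_vector_derivative 0) (at 0)"
        unfolding nil by (rule has_vector_derivative_const)
    qed
    then have "c * (y * ppow_deriv y x (Suc m) + x * c) = 0"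
      by (simp add: c_def)
    then have "c * y * ppow_deriv y x (Suc m) + c * x * c = 0"
      by (simp add: distrib_left mult.assoc)
    moreover have "c * y = 0"
      using ppow_add[of "Suc m" 1 y] nil by (simp add: c_def)
    ultimately show ?thesis by simp
  qed
  then show ?thesis
    using prime unfolding prime_ring_def c_def by blast
qed

lemma prime_nil_eq_0:
  fixes y :: "'a::real_normed_algebra"
  assumes prime: "prime_ring TYPE('a)" and "0 < n" and "\<And>z::'a. ppow z n = 0"
  shows "y = 0"
  using assms(2,3)
proof (induction n)
  case (Suc n)
  then show ?case
    using ppow_eq_0_descent[OF prime] by (cases n) auto
qed simp

lemma prime_commutative_if_ppow_central:
  fixes x y :: "'a::real_normed_algebra"
  assumes prime: "prime_ring TYPE('a)" and n: "0 < n" and central: "\<And>y::'a. ppow y n \<in> center"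
  shows "x * y = y * x"
proof (rule ccontr)
  assume "x * y \<noteq> y * x"
  then have x: "x \<notin> center" by (auto simp: center_def)
  have "ppow z n = 0" for z :: 'a
  proof (rule poly_curve_eq_0[where h = "\<lambda>t. ppow (z + t *\<^sub>R x) n" and t = 0, simplified])
    show "poly_curve (\<lambda>t. ppow (z + t *\<^sub>R x) n)"
      by (intro poly_curve_ppow poly_curve_line)
    have unique: "s = t" if "z + s *\<^sub>R x \<in> center" "z + t *\<^sub>R x \<in> center" for s t
    proof (rule ccontr)
      assume "s \<noteq> t"
      have "(z + s *\<^sub>R x) - (z + t *\<^sub>R x) = (s - t) *\<^sub>R x"
        by (simp add: algebra_simps)
      then have "(1 / (s - t)) *\<^sub>R ((s - t) *\<^sub>R x) \<in> center"
        using that by (metis center_scaleR center_diff)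
      then show False using x \<open>s \<noteq> t\<close> by simp
    qed
    have "eventually (\<lambda>t. z + t *\<^sub>R x \<notin> center) (at 0)"
    proof (cases "\<exists>t0. z + t0 *\<^sub>R x \<in> center")
      case True
      then obtain t0 where t0: "z + t0 *\<^sub>R x \<in> center" ..
      have "eventually (\<lambda>t. t \<noteq> t0) (at (0::real))"
        by (rule eventually_neq_at_within)
      then show ?thesis
        by eventually_elim (use unique t0 in blast)
    qed simp
    then show "eventually (\<lambda>t. ppow (z + t *\<^sub>R x) n = 0) (at 0)"
      by eventually_elim (use central_or_ppow_eq_0[OF prime n central] in blast)
  qed
  then have "x = 0"
    using prime_nil_eq_0[OF prime n] by blast
  then show False
    using x by (simp add: center_def)
qed

definition identity_lhs :: "('a::{times,plus,minus} \<Rightarrow> 'a) \<Rightarrow> nat \<Rightarrow> nat \<Rightarrow> 'a \<Rightarrow> 'a \<Rightarrow> 'a" where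
  "identity_lhs f p q x y = f (jordan_prod (ppow x p) (ppow y q)) + commutator (ppow x p) (ppow y q)"

lemma poly_curve_identity_lhs:
  fixes f :: "'a::real_algebra \<Rightarrow> 'a"
  assumes "linear f" "poly_curve X" "poly_curve Y"
  shows "poly_curve (\<lambda>t. identity_lhs f p q (X t) (Y t))"
  unfolding identity_lhs_def jordan_prod_def commutator_def
  by (intro poly_curve_add poly_curve_diff poly_curve_mult poly_curve_ppow assms
      poly_curve_linear[OF assms(1)])

lemma continuous_on_identity_lhs [continuous_intros]:
  fixes f :: "'a::real_normed_algebra \<Rightarrow> 'a"
  assumes "continuous_on UNIV f" "continuous_on S X" "continuous_on S Y"
  shows "continuous_on S (\<lambda>z. identity_lhs f p q (X z) (Y z))"
  unfolding identity_lhs_def jordan_prod_def commutator_def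
  by (intro continuous_intros continuous_on_compose2[OF assms(1)] assms) auto

lemma identity_lhs_diagonal:
  fixes f :: "'a::real_algebra \<Rightarrow> 'a"
  assumes "linear f" "0 < p" "0 < q"
  shows "identity_lhs f p q x x = 2 *\<^sub>R f (ppow x (p + q))"
proof -
  have "ppow x p * ppow x q = ppow x (p + q)" "ppow x q * ppow x p = ppow x (p + q)"
    using ppow_add[of p q x] ppow_add[of q p x] assms(2,3) by (simp_all add: add.commute)
  then show ?thesis
    unfolding identity_lhs_def jordan_prod_def commutator_def
    by (simp add: linear_add[OF assms(1)] scaleR_2)
qed

theorem theorem2p3:
  fixes f :: "'a::{real_normed_algebra, banach} \<Rightarrow> 'a"
    and H1 H2 :: "'a set"
  assumes "prime_ring TYPE('a)"
    and "open H1" and "H1 \<noteq> {}" and "open H2" and "H2 \<noteq> {}"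
    and "is_automorphism f" and "continuous_on UNIV f"
    and "\<forall>x\<in>H1. \<forall>y\<in>H2. \<exists>p q::nat. p > 0 \<and> q > 0 \<and>
           f (jordan_prod (ppow x p) (ppow y q)) + commutator (ppow x p) (ppow y q) \<in> center"
  shows "\<forall>x y::'a. x * y = y * x"
proof -
  have inj: "inj f" and add: "\<And>x y. f (x + y) = f x + f y" and mult: "\<And>x y. f (x * y) = f x * f y"
    using assms(6) unfolding is_automorphism_def bij_def by blast+
  have lin: "linear f"
    using linear_if_additive_continuous[OF add assms(7)] .
  \<comment> \<open>indexed by \<open>(p - 1, q - 1)\<close>, so that every index is admissible\<close>
  define E where "E pq = (\<lambda>z. identity_lhs f (Suc (fst pq)) (Suc (snd pq)) (fst z) (snd z)) -` center"
    for pq :: "nat \<times> nat"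
  have closed: "closed (E pq)" for pq
    unfolding E_def by (intro closed_vimage closed_center continuous_intros assms(7))
  have cover: "H1 \<times> H2 \<subseteq> (\<Union>pq. E pq)"
  proof clarify
    fix x y assume "x \<in> H1" "y \<in> H2"
    then obtain p q where "0 < p" "0 < q" "identity_lhs f p q x y \<in> center"
      using assms(8) unfolding identity_lhs_def by blast
    then have "(x, y) \<in> E (p - 1, q - 1)"
      by (simp add: E_def)
    then show "(x, y) \<in> (\<Union>pq. E pq)" by blast
  qed
  have "open (H1 \<times> H2)" "H1 \<times> H2 \<noteq> {}"
    using assms(2-5) by (auto simp: open_Times)
  then obtain pq where "interior (E pq) \<noteq> {}"
    using Baire_countable_closed_cover[OF _ _ closed cover] by blast
  then obtain z0 where z0: "z0 \<in> interior (E pq)" by blast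
  define p q where "p = Suc (fst pq)" and "q = Suc (snd pq)"
  have identity: "identity_lhs f p q x y \<in> center" for x y :: 'a
  proof -
    let ?\<Phi> = "\<lambda>z. identity_lhs f p q (fst z) (snd z)"
    have "?\<Phi> (x, y) \<in> center"
    proof (rule poly_on_lines_central[OF _ open_interior z0])
      show "poly_curve (\<lambda>t. ?\<Phi> (a + t *\<^sub>R b))" for a b
        by (simp add: poly_curve_identity_lhs[OF lin] poly_curve_line)
      show "?\<Phi> u \<in> center" if "u \<in> interior (E pq)" for u
        using interior_subset that by (fastforce simp: E_def p_def q_def)
    qed
    then show ?thesis by simp
  qed
  have pq: "0 < p" "0 < q" by (simp_all add: p_def q_def)
  have central: "ppow x (p + q) \<in> center" for x :: 'a
  proof (rule center_if_image_center[OF inj mult])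
    have "(1 / 2) *\<^sub>R identity_lhs f p q x x \<in> center"
      using identity by (rule center_scaleR)
    then show "f (ppow x (p + q)) \<in> center"
      by (simp add: identity_lhs_diagonal[OF lin pq])
  qed
  have "0 < p + q" using pq by simp
  then show ?thesis
    by (intro allI prime_commutative_if_ppow_central[OF assms(1) _ central])
qed

end
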